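(* Suppose there exists $\rho$ such that for every metric space $M$ and every $s\in M$ for which $d(s,p)$ is the same for all $p\in M\setminus\{s\}$, the infinite server problem on $(M,s)$ admits a strictly $\rho$-competitive online algorithm. Then for every metric space $M$ and every $s\in M$ the infinite server problem on $(M,s)$ is competitive.
   Context: Infinite server problem on $(M,s)$: $M$ is a metric space with metric $d$ and $s\in M$ the source; an unbounded number of servers initially reside at $s$. A finite sequence of requests (points of $M$) is revealed one by one; each must be served immediately, without knowledge of future requests, by moving some server to it; the cost is the total distance traveled. An online algorithm $ALG$ is strictly $\rho$-competitive if $ALG(\sigma)\le\rho\,OPT(\sigma)$ for all request sequences $\sigma$; the problem is competitive if some online algorithm satisfies $ALG(\sigma)\le\rho'\,OPT(\sigma)+c$ for all $\sigma$, for some constants $\rho',c$. *)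

theory Defs
  imports "HOL-Analysis.Analysis"
begin

text \<open>Servers are indexed by natural numbers (an unbounded
supply); a configuration assigns a position to every server.\<close>

fun serve_cost :: "('a \<Rightarrow> 'a \<Rightarrow> real) \<Rightarrow> (nat \<Rightarrow> 'a) \<Rightarrow> ('a \<times> nat) list \<Rightarrow> real" where
  "serve_cost d conf [] = 0"
| "serve_cost d conf ((r, j) # rest) = d (conf j) r + serve_cost d (conf(j := r)) rest"

text \<open>A deterministic online algorithm: given the previously revealed requests and the
current request, it chooses which server to move to the current request.\<close>
type_synonym 'a online_alg = "'a list \<Rightarrow> 'a \<Rightarrow> nat"

definition alg_cost :: "('a \<Rightarrow> 'a \<Rightarrow> real) \<Rightarrow> 'a \<Rightarrow> 'a online_alg \<Rightarrow> 'a list \<Rightarrow> real" where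
  "alg_cost d s alg \<sigma> =
     serve_cost d (\<lambda>_. s) (zip \<sigma> (map (\<lambda>i. alg (take i \<sigma>) (\<sigma> ! i)) [0..<length \<sigma>]))"

definition opt_cost :: "('a \<Rightarrow> 'a \<Rightarrow> real) \<Rightarrow> 'a \<Rightarrow> 'a list \<Rightarrow> real" where
  "opt_cost d s \<sigma> =
     Inf {serve_cost d (\<lambda>_. s) (zip \<sigma> js) | js. length js = length \<sigma>}"

definition strictly_competitive_alg ::
    "'a set \<Rightarrow> ('a \<Rightarrow> 'a \<Rightarrow> real) \<Rightarrow> 'a \<Rightarrow> real \<Rightarrow> 'a online_alg \<Rightarrow> bool" where
  "strictly_competitive_alg M d s \<rho> alg \<longleftrightarrow>
     (\<forall>\<sigma>. set \<sigma> \<subseteq> M \<longrightarrow> alg_cost d s alg \<sigma> \<le> \<rho> * opt_cost d s \<sigma>)"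

definition infinite_server_competitive :: "'a set \<Rightarrow> ('a \<Rightarrow> 'a \<Rightarrow> real) \<Rightarrow> 'a \<Rightarrow> bool" where
  "infinite_server_competitive M d s \<longleftrightarrow>
     (\<exists>alg :: 'a online_alg. \<exists>\<rho>' c :: real.
        \<forall>\<sigma>. set \<sigma> \<subseteq> M \<longrightarrow> alg_cost d s alg \<sigma> \<le> \<rho>' * opt_cost d s \<sigma> + c)"

end

theory Submission
  imports Defs "HOL-Library.Nat_Bijection"
begin

text \<open>Split \<open>M - {s}\<close> into the dyadic rings \<open>R\<^sub>i = {p. 2\<^sup>i\<^sup>-\<^sup>1 < d s p \<le> 2\<^sup>i}\<close>. On \<open>R\<^sub>i \<union> {s}\<close> put
the metric that places \<open>s\<close> at distance \<open>2\<^sup>i\<close> from every point of the ring and truncates \<open>d\<close> at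
\<open>2\<^sup>i\<^sup>-\<^sup>1\<close> inside it; it is within a factor 4 of \<open>d\<close>, so running a strictly \<open>\<rho>\<close>-competitive algorithm
for each ring on its own servers costs at most \<open>4\<rho>\<close> times the sum of the ring optima. Conversely
every server path of an offline solution pays, ring by ring, its first entry into the ring
(a geometric series dominated by the farthest ring reached) plus a tent-weighted truncation of
its length, and each point is seen by at most three tents; so the ring optima sum to at most
\<open>10\<close> times the optimum.\<close>

subsection \<open>Costs of server assignments\<close>

lemma serve_cost_cong:
  "(\<And>j. j \<in> snd ` set L \<Longrightarrow> conf j = conf' j) \<Longrightarrow> serve_cost d conf L = serve_cost d conf' L"
proof (induction L arbitrary: conf conf')
  case (Cons x L)
  obtain r j where x: "x = (r, j)" by (cases x)
  have "conf j = conf' j" using Cons.prems x by force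
  moreover have "serve_cost d (conf(j := r)) L = serve_cost d (conf'(j := r)) L"
    by (rule Cons.IH) (use Cons.prems in auto)
  ultimately show ?case by (simp add: x)
qed simp

lemma serve_cost_split_servers:
  "serve_cost d conf L = serve_cost d conf (filter (\<lambda>x. Q (snd x)) L)
     + serve_cost d conf (filter (\<lambda>x. \<not> Q (snd x)) L)"
proof (induction L arbitrary: conf)
  case (Cons x L)
  obtain r j where x: "x = (r, j)" by (cases x)
  show ?case
  proof (cases "Q j")
    case True
    have "serve_cost d (conf(j := r)) (filter (\<lambda>x. \<not> Q (snd x)) L)
        = serve_cost d conf (filter (\<lambda>x. \<not> Q (snd x)) L)"
      by (rule serve_cost_cong) (use True in auto)
    moreover have "serve_cost d (conf(j := r)) L
        = serve_cost d (conf(j := r)) (filter (\<lambda>x. Q (snd x)) L)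
          + serve_cost d (conf(j := r)) (filter (\<lambda>x. \<not> Q (snd x)) L)"
      by (rule Cons.IH)
    ultimately show ?thesis using True by (simp add: x)
  next
    case False
    have "serve_cost d (conf(j := r)) (filter (\<lambda>x. Q (snd x)) L)
        = serve_cost d conf (filter (\<lambda>x. Q (snd x)) L)"
      by (rule serve_cost_cong) (use False in auto)
    moreover have "serve_cost d (conf(j := r)) L
        = serve_cost d (conf(j := r)) (filter (\<lambda>x. Q (snd x)) L)
          + serve_cost d (conf(j := r)) (filter (\<lambda>x. \<not> Q (snd x)) L)"
      by (rule Cons.IH)
    ultimately show ?thesis using False by (simp add: x)
  qed
qed simp

lemma serve_cost_sum_classes:
  assumes "finite C" "\<forall>x\<in>set L. cls (snd x) \<in> C"
  shows "serve_cost d conf L = (\<Sum>c\<in>C. serve_cost d conf (filter (\<lambda>x. cls (snd x) = c) L))"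
  using assms
proof (induction C arbitrary: L rule: finite_induct)
  case empty
  then show ?case by (cases L) auto
next
  case (insert c C)
  let ?rest = "filter (\<lambda>x. cls (snd x) \<noteq> c) L"
  have "serve_cost d conf L = serve_cost d conf (filter (\<lambda>x. cls (snd x) = c) L) + serve_cost d conf ?rest"
    by (rule serve_cost_split_servers)
  also have "serve_cost d conf ?rest = (\<Sum>c'\<in>C. serve_cost d conf (filter (\<lambda>x. cls (snd x) = c') ?rest))"
    using insert.prems by (intro insert.IH) auto
  also have "\<dots> = (\<Sum>c'\<in>C. serve_cost d conf (filter (\<lambda>x. cls (snd x) = c') L))"
  proof (rule sum.cong)
    fix c' assume "c' \<in> C"
    then have "filter (\<lambda>x. cls (snd x) = c') ?rest = filter (\<lambda>x. cls (snd x) = c') L"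
      using insert.hyps by (induction L) auto
    then show "serve_cost d conf (filter (\<lambda>x. cls (snd x) = c') ?rest)
        = serve_cost d conf (filter (\<lambda>x. cls (snd x) = c') L)" by simp
  qed simp
  finally show ?case using insert.hyps by simp
qed

lemma serve_cost_rename_servers:
  "inj f \<Longrightarrow> serve_cost d conf (map (\<lambda>(r, j). (r, f j)) L) = serve_cost d (conf \<circ> f) L"
proof (induction L arbitrary: conf)
  case (Cons x L)
  obtain r j where x: "x = (r, j)" by (cases x)
  have "conf(f j := r) \<circ> f = (conf \<circ> f)(j := r)"
    using Cons.prems by (auto simp: fun_eq_iff inj_eq)
  then have "serve_cost d (conf(f j := r)) (map (\<lambda>(r, j). (r, f j)) L) = serve_cost d ((conf \<circ> f)(j := r)) L"
    using Cons.IH[OF Cons.prems] by metis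
  then show ?case by (simp add: x comp_def)
qed simp

lemma serve_cost_nonneg: "(\<And>a b. 0 \<le> d a b) \<Longrightarrow> 0 \<le> serve_cost d conf L"
proof (induction L arbitrary: conf)
  case (Cons x L) then show ?case by (cases x) (simp add: add_nonneg_nonneg)
qed simp

lemma serve_cost_le_scaled:
  assumes "\<And>a b. a \<in> A \<Longrightarrow> b \<in> A \<Longrightarrow> d a b \<le> c * e a b"
    and "range conf \<subseteq> A" and "fst ` set L \<subseteq> A"
  shows "serve_cost d conf L \<le> c * serve_cost e conf L"
  using assms(2,3)
proof (induction L arbitrary: conf)
  case (Cons x L)
  obtain r j where x: "x = (r, j)" by (cases x)
  have "conf j \<in> A" "r \<in> A" using Cons.prems x by auto
  then have "d (conf j) r \<le> c * e (conf j) r" by (rule assms(1))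
  moreover have "serve_cost d (conf(j := r)) L \<le> c * serve_cost e (conf(j := r)) L"
    using Cons.prems x by (intro Cons.IH) auto
  ultimately show ?case by (simp add: x distrib_left)
qed simp

fun path_length :: "('a \<Rightarrow> 'a \<Rightarrow> real) \<Rightarrow> 'a \<Rightarrow> 'a list \<Rightarrow> real" where
  "path_length d a [] = 0"
| "path_length d a (p # P) = d a p + path_length d p P"

lemma serve_cost_single_server: "serve_cost d conf (map (\<lambda>p. (p, j)) P) = path_length d (conf j) P"
  by (induction P arbitrary: conf) auto

lemma serve_cost_eq_sum_path_length:
  assumes "finite J" "snd ` set L \<subseteq> J"
  shows "serve_cost d conf L = (\<Sum>j\<in>J. path_length d (conf j) (map fst (filter (\<lambda>x. snd x = j) L)))"
proof -
  have "serve_cost d conf L = (\<Sum>j\<in>J. serve_cost d conf (filter (\<lambda>x. id (snd x) = j) L))"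
    by (rule serve_cost_sum_classes) (use assms in auto)
  also have "\<dots> = (\<Sum>j\<in>J. path_length d (conf j) (map fst (filter (\<lambda>x. snd x = j) L)))"
  proof (rule sum.cong)
    fix j
    have "filter (\<lambda>x. snd x = j) L = map (\<lambda>p. (p, j)) (map fst (filter (\<lambda>x. snd x = j) L))"
      by (induction L) auto
    then have "serve_cost d conf (filter (\<lambda>x. snd x = j) L)
        = serve_cost d conf (map (\<lambda>p. (p, j)) (map fst (filter (\<lambda>x. snd x = j) L)))"
      by (rule arg_cong)
    also have "\<dots> = path_length d (conf j) (map fst (filter (\<lambda>x. snd x = j) L))"
      by (rule serve_cost_single_server)
    finally show "serve_cost d conf (filter (\<lambda>x. id (snd x) = j) L)
        = path_length d (conf j) (map fst (filter (\<lambda>x. snd x = j) L))"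
      by simp
  qed simp
  finally show ?thesis .
qed

lemma path_length_stay: "d a a = 0 \<Longrightarrow> set P \<subseteq> {a} \<Longrightarrow> path_length d a P = 0"
  by (induction P) auto

lemma path_length_nonneg: "(\<And>a b. 0 \<le> d a b) \<Longrightarrow> 0 \<le> path_length d a P"
  by (induction P arbitrary: a) (auto simp: add_nonneg_nonneg)

lemma path_length_sum: "path_length (\<lambda>a b. \<Sum>i\<in>I. d i a b) a P = (\<Sum>i\<in>I. path_length (d i) a P)"
  by (induction P arbitrary: a) (auto simp: sum.distrib)

lemma path_length_scale: "path_length (\<lambda>a b. c * d a b) a P = c * path_length d a P"
  by (induction P arbitrary: a) (auto simp: algebra_simps)

lemma path_length_mono:
  "(\<And>a b. a \<in> M \<Longrightarrow> b \<in> M \<Longrightarrow> d a b \<le> e a b) \<Longrightarrow> a \<in> M \<Longrightarrow> set P \<subseteq> M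
    \<Longrightarrow> path_length d a P \<le> path_length e a P"
proof (induction P arbitrary: a)
  case (Cons p P)
  then have "d a p \<le> e a p" "path_length d p P \<le> path_length e p P" by auto
  then show ?case by simp
qed simp

lemma (in Metric_space) dist_le_path_length:
  assumes "a \<in> M" "set P \<subseteq> M" "p \<in> set P"
  shows "d a p \<le> path_length d a P"
  using assms
proof (induction P arbitrary: a)
  case (Cons q Q)
  have "q \<in> M" "set Q \<subseteq> M" using Cons.prems by auto
  show ?case
  proof (cases "p = q")
    case True
    then show ?thesis using path_length_nonneg[of d q Q] nonneg by simp
  next
    case False
    then have "d q p \<le> path_length d q Q" using Cons \<open>q \<in> M\<close> \<open>set Q \<subseteq> M\<close> by simp
    moreover have "d a p \<le> d a q + d q p" using triangle Cons.prems \<open>q \<in> M\<close> by auto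
    ultimately show ?thesis by simp
  qed
qed simp

lemma map_fst_filter_zip:
  "length xs = length ys \<Longrightarrow> map fst (filter (\<lambda>x. P (fst x)) (zip xs ys)) = filter P xs"
  by (induction xs ys rule: list_induct2) auto

lemma opt_cost_nonneg: "(\<And>a b. 0 \<le> d a b) \<Longrightarrow> 0 \<le> opt_cost d s \<sigma>"
  unfolding opt_cost_def
  by (rule cInf_greatest) (auto intro: serve_cost_nonneg exI[of _ "replicate (length \<sigma>) 0"])

lemma opt_cost_le:
  assumes "\<And>a b. 0 \<le> d a b" "length js = length \<sigma>"
  shows "opt_cost d s \<sigma> \<le> serve_cost d (\<lambda>_. s) (zip \<sigma> js)"
  unfolding opt_cost_def
proof (rule cInf_lower)
  show "bdd_below {serve_cost d (\<lambda>_. s) (zip \<sigma> js) |js. length js = length \<sigma>}"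
    by (rule bdd_belowI[of _ 0]) (auto intro: serve_cost_nonneg assms(1))
qed (use assms(2) in blast)

lemma opt_cost_filter_le:
  assumes "\<And>a b. 0 \<le> d a b" "length js = length \<sigma>"
  shows "opt_cost d s (filter P \<sigma>) \<le> serve_cost d (\<lambda>_. s) (filter (\<lambda>x. P (fst x)) (zip \<sigma> js))"
proof -
  let ?F = "filter (\<lambda>x. P (fst x)) (zip \<sigma> js)"
  have "opt_cost d s (map fst ?F) \<le> serve_cost d (\<lambda>_. s) (zip (map fst ?F) (map snd ?F))"
    by (rule opt_cost_le) (simp_all add: assms(1))
  also have "zip (map fst ?F) (map snd ?F) = ?F" by (rule zip_map_fst_snd)
  finally show ?thesis by (simp only: map_fst_filter_zip[OF assms(2)[symmetric]])
qed

definition choices :: "'a online_alg \<Rightarrow> 'a list \<Rightarrow> nat list" where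
  "choices alg \<sigma> = map (\<lambda>k. alg (take k \<sigma>) (\<sigma> ! k)) [0..<length \<sigma>]"

lemma length_choices [simp]: "length (choices alg \<sigma>) = length \<sigma>"
  by (simp add: choices_def)

lemma alg_cost_choices: "alg_cost d s alg \<sigma> = serve_cost d (\<lambda>_. s) (zip \<sigma> (choices alg \<sigma>))"
  by (simp add: alg_cost_def choices_def)

lemma choices_Nil [simp]: "choices alg [] = []"
  by (simp add: choices_def)

lemma choices_snoc: "choices alg (\<sigma> @ [r]) = choices alg \<sigma> @ [alg \<sigma> r]"
  by (auto simp: choices_def nth_append intro!: map_cong)

lemma alg_cost_le_scaled:
  assumes "\<And>a b. a \<in> A \<Longrightarrow> b \<in> A \<Longrightarrow> d a b \<le> c * e a b" "s \<in> A" "set \<sigma> \<subseteq> A"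
  shows "alg_cost d s alg \<sigma> \<le> c * alg_cost e s alg \<sigma>"
  unfolding alg_cost_choices
  by (rule serve_cost_le_scaled[OF assms(1)]) (use assms(2,3) in \<open>auto dest: set_zip_leftD\<close>)

subsection \<open>Dyadic rings around the source\<close>

locale pointed_metric_space = Metric_space M d for M :: "'a set" and d :: "'a \<Rightarrow> 'a \<Rightarrow> real" +
  fixes s :: 'a
  assumes source_in: "s \<in> M"
begin

definition ring_index :: "'a \<Rightarrow> int" where
  "ring_index p = \<lceil>log 2 (d s p)\<rceil>"

definition in_ring :: "int \<Rightarrow> 'a \<Rightarrow> bool" where
  "in_ring i p \<longleftrightarrow> p \<noteq> s \<and> ring_index p = i"

definition ring_space :: "int \<Rightarrow> 'a set" where
  "ring_space i = {p \<in> M. p = s \<or> in_ring i p}"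

text \<open>Ring \<open>i\<close> lies at distance \<open>(2 ring_scale i, 4 ring_scale i]\<close> from \<open>s\<close>.\<close>
definition ring_scale :: "int \<Rightarrow> real" where
  "ring_scale i = 2 powr (real_of_int i - 2)"

text \<open>A 1-Lipschitz tent in \<open>d s p\<close>, equal to \<open>ring_scale i\<close> on ring \<open>i\<close> and vanishing outside
\<open>(ring_scale i, 5 ring_scale i)\<close>.\<close>
definition ring_weight :: "int \<Rightarrow> 'a \<Rightarrow> real" where
  "ring_weight i p = max 0 (min (ring_scale i) (min (d s p - ring_scale i) (5 * ring_scale i - d s p)))"

definition truncated_dist :: "int \<Rightarrow> 'a \<Rightarrow> 'a \<Rightarrow> real" where
  "truncated_dist i p q = min (d p q) (ring_weight i p + ring_weight i q)"

definition ring_metric :: "int \<Rightarrow> 'a \<Rightarrow> 'a \<Rightarrow> real" where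
  "ring_metric i p q =
     (if p = q then 0 else if p = s \<or> q = s then 4 * ring_scale i else truncated_dist i p q)"

lemma ring_scale_pos: "0 < ring_scale i"
  by (simp add: ring_scale_def)

lemma ring_scale_shift: "2 powr (real_of_int i + k) = 2 powr (k + 2) * ring_scale i"
  by (simp add: ring_scale_def powr_add[symmetric] add_ac)

lemma ring_dist_bounds:
  assumes "p \<in> M" "in_ring i p"
  shows "2 * ring_scale i < d s p" "d s p \<le> 4 * ring_scale i"
proof -
  have "p \<noteq> s" and ceil: "\<lceil>log 2 (d s p)\<rceil> = i"
    using assms by (auto simp: in_ring_def ring_index_def)
  then have "d s p \<noteq> 0" using zero[OF source_in assms(1)] by auto
  then have pos: "0 < d s p" using nonneg[of s p] by linarith
  have "log 2 (d s p) \<le> real_of_int i" "real_of_int i - 1 < log 2 (d s p)"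
    using ceil ceiling_correct[of "log 2 (d s p)"] by linarith+
  then have "d s p \<le> 2 powr (real_of_int i + 0)" "2 powr (real_of_int i + -1) < d s p"
    using pos by (simp_all add: log_le_iff less_log_iff)
  then show "2 * ring_scale i < d s p" "d s p \<le> 4 * ring_scale i"
    by (simp_all only: ring_scale_shift) simp_all
qed

lemma ring_weight_nonneg: "0 \<le> ring_weight i p"
  by (simp add: ring_weight_def)

lemma ring_weight_in_ring: "p \<in> M \<Longrightarrow> in_ring i p \<Longrightarrow> ring_weight i p = ring_scale i"
  using ring_dist_bounds[of p i] ring_scale_pos[of i] by (simp add: ring_weight_def)

lemma ring_weight_lipschitz:
  assumes "p \<in> M" "q \<in> M"
  shows "\<bar>ring_weight i p - ring_weight i q\<bar> \<le> d p q"
proof -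
  have "\<bar>d s p - d s q\<bar> \<le> d p q"
    using triangle[OF source_in assms] triangle[OF source_in assms(2,1)] commute[of q p] by linarith
  then show ?thesis unfolding ring_weight_def by (simp add: max_def min_def abs_le_iff)
qed

lemma ring_weight_pos_imp_index:
  assumes "0 < ring_weight i p"
  shows "i \<in> {\<lfloor>log 2 (d s p)\<rfloor> .. \<lfloor>log 2 (d s p)\<rfloor> + 2}"
proof -
  have bounds: "ring_scale i < d s p" "d s p < 5 * ring_scale i"
    using assms by (auto simp: ring_weight_def max_def min_def split: if_splits)
  then have "2 powr (real_of_int i + -2) < d s p" "d s p < 2 powr (real_of_int i + 1)"
    by (simp_all only: ring_scale_shift) (use ring_scale_pos[of i] in simp_all)
  moreover have "0 < d s p" using bounds ring_scale_pos[of i] by linarith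
  ultimately have "real_of_int i - 2 < log 2 (d s p)" "log 2 (d s p) < real_of_int i + 1"
    by (simp_all add: less_log_iff log_less_iff)
  then have "i - 2 \<le> \<lfloor>log 2 (d s p)\<rfloor>" "\<lfloor>log 2 (d s p)\<rfloor> \<le> i"
    by (simp_all add: le_floor_iff floor_le_iff)
  then show ?thesis by simp
qed

lemma truncated_dist_nonneg: "0 \<le> truncated_dist i p q"
  by (simp add: truncated_dist_def ring_weight_nonneg)

lemma truncated_dist_le_dist: "truncated_dist i p q \<le> d p q"
  by (simp add: truncated_dist_def)

lemma truncated_dist_triangle:
  assumes "p \<in> M" "q \<in> M" "r \<in> M"
  shows "truncated_dist i p r \<le> truncated_dist i p q + truncated_dist i q r"
proof -
  have "d p r \<le> d p q + d q r" by (rule triangle[OF assms])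
  moreover have "\<bar>ring_weight i p - ring_weight i q\<bar> \<le> d p q" "\<bar>ring_weight i q - ring_weight i r\<bar> \<le> d q r"
    using ring_weight_lipschitz assms by auto
  ultimately show ?thesis
    using ring_weight_nonneg[of i q] unfolding truncated_dist_def by (simp add: min_def abs_le_iff)
qed

lemma truncated_dist_in_ring:
  "p \<in> M \<Longrightarrow> q \<in> M \<Longrightarrow> in_ring i p \<Longrightarrow> in_ring i q \<Longrightarrow> truncated_dist i p q = min (d p q) (2 * ring_scale i)"
  by (simp add: truncated_dist_def ring_weight_in_ring)

lemma sum_truncated_dist_le:
  assumes "finite I" "a \<in> M" "b \<in> M"
  shows "(\<Sum>i\<in>I. truncated_dist i a b) \<le> 6 * d a b"
proof -
  define U where "U = {\<lfloor>log 2 (d s a)\<rfloor> .. \<lfloor>log 2 (d s a)\<rfloor> + 2} \<union> {\<lfloor>log 2 (d s b)\<rfloor> .. \<lfloor>log 2 (d s b)\<rfloor> + 2}"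
  have card_U: "card U \<le> 6"
    unfolding U_def by (rule order_trans[OF card_Un_le]) simp
  have outside: "truncated_dist i a b = 0" if "i \<notin> U" for i
  proof -
    have "ring_weight i a = 0" "ring_weight i b = 0"
      using that ring_weight_pos_imp_index[of i a] ring_weight_pos_imp_index[of i b]
        ring_weight_nonneg[of i a] ring_weight_nonneg[of i b] by (force simp: U_def)+
    then show ?thesis using nonneg[of a b] by (simp add: truncated_dist_def)
  qed
  have "(\<Sum>i\<in>I. truncated_dist i a b) = (\<Sum>i\<in>I \<inter> U. truncated_dist i a b)"
    using assms(1) outside by (intro sum.mono_neutral_right) auto
  also have "\<dots> \<le> (\<Sum>i\<in>I \<inter> U. d a b)" by (rule sum_mono) (rule truncated_dist_le_dist)
  also have "\<dots> \<le> real (card U) * d a b"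
    using nonneg[of a b] by (simp add: U_def card_mono mult_right_mono)
  also have "\<dots> \<le> 6 * d a b" using card_U nonneg[of a b] by (intro mult_right_mono) simp_all
  finally show ?thesis .
qed

lemma ring_metric_nonneg: "0 \<le> ring_metric i a b"
  using ring_scale_pos[of i] truncated_dist_nonneg[of i a b] by (simp add: ring_metric_def)

lemma ring_metric_in_ring:
  "p \<in> M \<Longrightarrow> q \<in> M \<Longrightarrow> in_ring i p \<Longrightarrow> in_ring i q \<Longrightarrow> ring_metric i p q = truncated_dist i p q"
  using ring_weight_nonneg[of i p] zero[of p p] by (auto simp: ring_metric_def truncated_dist_def in_ring_def)

lemma source_in_ring_space: "s \<in> ring_space i"
  by (simp add: ring_space_def source_in)

lemma ring_metric_source_equidistant:
  "\<forall>p \<in> ring_space i - {s}. \<forall>q \<in> ring_space i - {s}. ring_metric i s p = ring_metric i s q"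
  by (simp add: ring_metric_def)

lemma ring_metric_within_ring_le:
  "p \<in> ring_space i \<Longrightarrow> q \<in> ring_space i \<Longrightarrow> p \<noteq> s \<Longrightarrow> q \<noteq> s \<Longrightarrow> ring_metric i p q \<le> 2 * ring_scale i"
  using ring_scale_pos[of i]
  by (auto simp: ring_space_def ring_metric_def truncated_dist_in_ring in_ring_def[of i])

lemma Metric_space_ring_metric: "Metric_space (ring_space i) (ring_metric i)"
proof
  fix x y
  show "0 \<le> ring_metric i x y" by (rule ring_metric_nonneg)
  show "ring_metric i x y = ring_metric i y x"
    by (auto simp: ring_metric_def truncated_dist_def commute add.commute)
next
  fix x y assume x: "x \<in> ring_space i" and y: "y \<in> ring_space i"
  show "ring_metric i x y = 0 \<longleftrightarrow> x = y"
  proof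
    assume xy0: "ring_metric i x y = 0"
    show "x = y"
    proof (rule ccontr)
      assume "x \<noteq> y"
      then have "x \<noteq> s" "y \<noteq> s" using xy0 ring_scale_pos[of i] by (auto simp: ring_metric_def)
      then have "in_ring i x" "in_ring i y" "x \<in> M" "y \<in> M" using x y by (auto simp: ring_space_def)
      moreover have "0 < d x y" using zero[of x y] nonneg[of x y] \<open>x \<noteq> y\<close> \<open>x \<in> M\<close> \<open>y \<in> M\<close> by auto
      ultimately have "0 < ring_metric i x y"
        using ring_scale_pos[of i] by (simp add: ring_metric_in_ring truncated_dist_in_ring)
      then show False using xy0 by simp
    qed
  qed (simp add: ring_metric_def)
next
  fix x y z assume x: "x \<in> ring_space i" and y: "y \<in> ring_space i" and z: "z \<in> ring_space i"
  have M: "x \<in> M" "y \<in> M" "z \<in> M" using x y z by (auto simp: ring_space_def)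
  show "ring_metric i x z \<le> ring_metric i x y + ring_metric i y z"
  proof (cases "x = z \<or> x = y \<or> y = z \<or> x = s \<or> z = s")
    case True
    then show ?thesis
      using ring_metric_nonneg[of i x y] ring_metric_nonneg[of i y z] by (auto simp: ring_metric_def)
  next
    case False
    show ?thesis
    proof (cases "y = s")
      case True
      then show ?thesis
        using False ring_metric_within_ring_le[OF x z] ring_scale_pos[of i] ring_metric_nonneg[of i y z]
        by (simp add: ring_metric_def)
    next
      case ys: False
      then show ?thesis using False truncated_dist_triangle[OF M, of i] by (simp add: ring_metric_def)
    qed
  qed
qed

lemma dist_le_ring_metric:
  assumes "p \<in> ring_space i" "q \<in> ring_space i"
  shows "d p q \<le> 4 * ring_metric i p q"
proof (cases "p = q \<or> p = s \<or> q = s")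
  case True
  then show ?thesis
    using assms ring_dist_bounds(2)[of p i] ring_dist_bounds(2)[of q i] commute[of p s] source_in
      ring_scale_pos[of i] zero
    by (auto simp: ring_metric_def ring_space_def)
next
  case False
  then have p: "p \<in> M" "in_ring i p" and q: "q \<in> M" "in_ring i q" using assms by (auto simp: ring_space_def)
  have "d p q \<le> d p s + d s q" by (rule triangle[OF p(1) source_in q(1)])
  then have "d p q \<le> 8 * ring_scale i"
    using ring_dist_bounds(2)[OF p] ring_dist_bounds(2)[OF q] commute[of p s] by linarith
  then show ?thesis
    using False nonneg[of p q] by (simp add: ring_metric_def truncated_dist_in_ring p q min_def)
qed

subsection \<open>The optimal costs of the rings\<close>

lemma path_length_truncated_step:
  assumes "a \<in> M" "b \<in> M" "set P \<subseteq> M"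
  shows "path_length (truncated_dist i) a P \<le> truncated_dist i a b + path_length (truncated_dist i) b P"
proof (cases P)
  case Nil then show ?thesis by (simp add: truncated_dist_nonneg)
next
  case (Cons q Q)
  then show ?thesis using truncated_dist_triangle[OF assms(1,2), of q i] assms(3) by simp
qed

lemma path_length_ring_le_truncated:
  assumes "a \<in> M" "in_ring i a" "set P \<subseteq> M"
  shows "path_length (ring_metric i) a (filter (in_ring i) P) \<le> path_length (truncated_dist i) a P"
  using assms
proof (induction P arbitrary: a)
  case (Cons p P)
  have p: "p \<in> M" and P: "set P \<subseteq> M" using Cons.prems by auto
  show ?case
  proof (cases "in_ring i p")
    case True
    then show ?thesis
      using Cons.IH[OF p True P] ring_metric_in_ring[OF Cons.prems(1) p Cons.prems(2) True] by simp
  next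
    case False
    then show ?thesis
      using Cons.IH[OF Cons.prems(1,2) P] path_length_truncated_step[OF Cons.prems(1) p P, of i] by simp
  qed
qed simp

lemma path_length_ring_from_source_le:
  assumes "set P \<subseteq> M"
  shows "path_length (ring_metric i) s (filter (in_ring i) P)
    \<le> (if \<exists>p\<in>set P. in_ring i p then 4 * ring_scale i else 0) + path_length (truncated_dist i) s P"
  using assms
proof (induction P)
  case (Cons p P)
  have p: "p \<in> M" and P: "set P \<subseteq> M" using Cons.prems by auto
  show ?case
  proof (cases "in_ring i p")
    case True
    then have "ring_metric i s p = 4 * ring_scale i" by (auto simp: ring_metric_def in_ring_def)
    then show ?thesis
      using True path_length_ring_le_truncated[OF p True P] truncated_dist_nonneg[of i s p] by simp
  next
    case False
    then show ?thesis
      using Cons.IH[OF P] path_length_truncated_step[OF source_in p P, of i] ring_scale_pos[of i]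
      by (auto split: if_splits)
  qed
qed simp

lemma sum_ring_scale_le:
  assumes "finite K" "\<forall>k\<in>K. k \<le> m"
  shows "(\<Sum>k\<in>K. ring_scale k) \<le> 2 * ring_scale m"
proof -
  define g where "g n = m - int n" for n :: nat
  have K: "K = g ` {n. g n \<in> K}"
  proof
    show "K \<subseteq> g ` {n. g n \<in> K}"
    proof
      fix k assume "k \<in> K"
      then have "g (nat (m - k)) = k" using assms(2) by (simp add: g_def)
      then show "k \<in> g ` {n. g n \<in> K}" using \<open>k \<in> K\<close> by (metis (mono_tags) image_eqI mem_Collect_eq)
    qed
  qed blast
  have "inj g" by (simp add: g_def inj_def)
  then have "finite {n. g n \<in> K}"
    using finite_vimageI[OF assms(1)] by (simp add: vimage_def)
  have "(\<Sum>k\<in>K. ring_scale k) = (\<Sum>n\<in>{n. g n \<in> K}. ring_scale (g n))"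
    by (rule sum.reindex_cong[OF _ K]) (use \<open>inj g\<close> in \<open>simp_all add: inj_on_def inj_def\<close>)
  also have "\<dots> = ring_scale m * (\<Sum>n\<in>{n. g n \<in> K}. (1/2) ^ n)"
    by (simp add: g_def ring_scale_def sum_distrib_left powr_diff powr_realpow power_one_over
        diff_diff_eq[symmetric] mult_ac)
  also have "\<dots> \<le> ring_scale m * 2"
    using geometric_sum_less[of "1/2::real" "{n. g n \<in> K}"] \<open>finite {n. g n \<in> K}\<close> ring_scale_pos[of m]
    by (intro mult_left_mono) simp_all
  finally show ?thesis by simp
qed

lemma sum_ring_entry_costs_le:
  assumes "finite I" "set P \<subseteq> M"
  shows "(\<Sum>i\<in>I. if \<exists>p\<in>set P. in_ring i p then 4 * ring_scale i else 0) \<le> 4 * path_length d s P"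
proof -
  define K where "K = {i\<in>I. \<exists>p\<in>set P. in_ring i p}"
  have "finite K" using assms(1) by (simp add: K_def)
  have "(\<Sum>i\<in>I. if \<exists>p\<in>set P. in_ring i p then 4 * ring_scale i else 0) = (\<Sum>i\<in>K. 4 * ring_scale i)"
    unfolding K_def using assms(1) by (simp add: sum.inter_filter)
  also have "\<dots> = 4 * (\<Sum>i\<in>K. ring_scale i)" by (simp add: sum_distrib_left)
  also have "\<dots> \<le> 4 * path_length d s P"
  proof (cases "K = {}")
    case True then show ?thesis using path_length_nonneg[of d s P] nonneg by simp
  next
    case False
    then have "Max K \<in> K" using \<open>finite K\<close> by simp
    then obtain p where p: "p \<in> set P" "in_ring (Max K) p" by (auto simp: K_def)
    have "(\<Sum>i\<in>K. ring_scale i) \<le> 2 * ring_scale (Max K)" by (rule sum_ring_scale_le) (simp_all add: \<open>finite K\<close>)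
    also have "\<dots> < d s p" using p assms(2) by (intro ring_dist_bounds(1)) auto
    also have "\<dots> \<le> path_length d s P" by (rule dist_le_path_length[OF source_in assms(2) p(1)])
    finally show ?thesis by simp
  qed
  finally show ?thesis .
qed

lemma sum_ring_path_length_le:
  assumes "finite I" "set P \<subseteq> M"
  shows "(\<Sum>i\<in>I. path_length (ring_metric i) s (filter (in_ring i) P)) \<le> 10 * path_length d s P"
proof -
  have "(\<Sum>i\<in>I. path_length (ring_metric i) s (filter (in_ring i) P))
      \<le> (\<Sum>i\<in>I. if \<exists>p\<in>set P. in_ring i p then 4 * ring_scale i else 0)
        + (\<Sum>i\<in>I. path_length (truncated_dist i) s P)"
    unfolding sum.distrib[symmetric] by (rule sum_mono) (rule path_length_ring_from_source_le[OF assms(2)])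
  also have "(\<Sum>i\<in>I. path_length (truncated_dist i) s P) = path_length (\<lambda>a b. \<Sum>i\<in>I. truncated_dist i a b) s P"
    by (rule path_length_sum[symmetric])
  also have "\<dots> \<le> path_length (\<lambda>a b. 6 * d a b) s P"
    by (rule path_length_mono[OF _ source_in assms(2)]) (rule sum_truncated_dist_le[OF assms(1)])
  also have "\<dots> = 6 * path_length d s P" by (rule path_length_scale)
  finally show ?thesis using sum_ring_entry_costs_le[OF assms] by linarith
qed

lemma sum_ring_serve_cost_le:
  assumes "finite I" "fst ` set L \<subseteq> M"
  shows "(\<Sum>i\<in>I. serve_cost (ring_metric i) (\<lambda>_. s) (filter (\<lambda>x. in_ring i (fst x)) L))
    \<le> 10 * serve_cost d (\<lambda>_. s) L"
proof -
  define J where "J = snd ` set L"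
  define P where "P j = map fst (filter (\<lambda>x. snd x = j) L)" for j
  have "finite J" by (simp add: J_def)
  have P: "set (P j) \<subseteq> M" for j using assms(2) by (auto simp: P_def)
  have filter_P: "map fst (filter (\<lambda>x. snd x = j) (filter (\<lambda>x. in_ring i (fst x)) L)) = filter (in_ring i) (P j)"
    for i j unfolding P_def by (induction L) auto
  have "(\<Sum>i\<in>I. serve_cost (ring_metric i) (\<lambda>_. s) (filter (\<lambda>x. in_ring i (fst x)) L))
      = (\<Sum>i\<in>I. \<Sum>j\<in>J. path_length (ring_metric i) s (filter (in_ring i) (P j)))"
  proof (rule sum.cong[OF refl])
    fix i
    have "serve_cost (ring_metric i) (\<lambda>_. s) (filter (\<lambda>x. in_ring i (fst x)) L)
      = (\<Sum>j\<in>J. path_length (ring_metric i) s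
           (map fst (filter (\<lambda>x. snd x = j) (filter (\<lambda>x. in_ring i (fst x)) L))))"
      by (rule serve_cost_eq_sum_path_length[OF \<open>finite J\<close>]) (auto simp: J_def)
    then show "serve_cost (ring_metric i) (\<lambda>_. s) (filter (\<lambda>x. in_ring i (fst x)) L)
      = (\<Sum>j\<in>J. path_length (ring_metric i) s (filter (in_ring i) (P j)))"
      by (simp only: filter_P)
  qed
  also have "\<dots> = (\<Sum>j\<in>J. \<Sum>i\<in>I. path_length (ring_metric i) s (filter (in_ring i) (P j)))"
    by (rule sum.swap)
  also have "\<dots> \<le> (\<Sum>j\<in>J. 10 * path_length d s (P j))"
    by (rule sum_mono) (rule sum_ring_path_length_le[OF assms(1) P])
  also have "\<dots> = 10 * serve_cost d (\<lambda>_. s) L"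
    unfolding P_def sum_distrib_left[symmetric]
    by (subst serve_cost_eq_sum_path_length[OF \<open>finite J\<close>]) (simp_all add: J_def)
  finally show ?thesis .
qed

lemma sum_ring_opt_cost_le:
  assumes "finite I" "set \<sigma> \<subseteq> M"
  shows "(\<Sum>i\<in>I. opt_cost (ring_metric i) s (filter (in_ring i) \<sigma>)) \<le> 10 * opt_cost d s \<sigma>"
proof -
  have lower: "(\<Sum>i\<in>I. opt_cost (ring_metric i) s (filter (in_ring i) \<sigma>)) / 10 \<le> v"
    if hv: "v \<in> {serve_cost d (\<lambda>_. s) (zip \<sigma> js) |js. length js = length \<sigma>}" for v
  proof -
    obtain js where js: "length js = length \<sigma>" and v: "v = serve_cost d (\<lambda>_. s) (zip \<sigma> js)"
      using hv by blast
    have "(\<Sum>i\<in>I. opt_cost (ring_metric i) s (filter (in_ring i) \<sigma>))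
        \<le> (\<Sum>i\<in>I. serve_cost (ring_metric i) (\<lambda>_. s) (filter (\<lambda>x. in_ring i (fst x)) (zip \<sigma> js)))"
      by (intro sum_mono opt_cost_filter_le ring_metric_nonneg js)
    also have "\<dots> \<le> 10 * v"
      unfolding v by (rule sum_ring_serve_cost_le[OF assms(1)]) (use assms(2) in \<open>auto dest: set_zip_leftD\<close>)
    finally show ?thesis by simp
  qed
  have "(\<Sum>i\<in>I. opt_cost (ring_metric i) s (filter (in_ring i) \<sigma>)) / 10 \<le> opt_cost d s \<sigma>"
    unfolding opt_cost_def[of d s \<sigma>]
    by (rule cInf_greatest[OF _ lower]) (auto intro: exI[of _ "replicate (length \<sigma>) 0"])
  then show ?thesis by simp
qed

end

subsection \<open>Running one algorithm per ring\<close>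

text \<open>Server \<open>0\<close> serves requests at the source at no cost; ring \<open>i\<close> gets the servers
\<open>server_of_ring i k\<close>, pairwise disjoint for distinct rings.\<close>
definition server_of_ring :: "int \<Rightarrow> nat \<Rightarrow> nat" where
  "server_of_ring i k = Suc (prod_encode (int_encode i, k))"

definition ring_of_server :: "nat \<Rightarrow> int option" where
  "ring_of_server j = (case j of 0 \<Rightarrow> None | Suc n \<Rightarrow> Some (int_decode (fst (prod_decode n))))"

lemma ring_of_server_of_ring [simp]: "ring_of_server (server_of_ring i k) = Some i"
  by (simp add: ring_of_server_def server_of_ring_def)

lemma ring_of_server_0 [simp]: "ring_of_server 0 = None"
  by (simp add: ring_of_server_def)

lemma inj_server_of_ring: "inj (server_of_ring i)"
  by (rule injI) (metis prod_encode_eq prod.inject old.nat.inject server_of_ring_def)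

context pointed_metric_space
begin

definition combined_alg :: "(int \<Rightarrow> 'a online_alg) \<Rightarrow> 'a online_alg" where
  "combined_alg alg h r =
     (if r = s then 0 else server_of_ring (ring_index r) (alg (ring_index r) (filter (in_ring (ring_index r)) h) r))"

lemma ring_of_combined_alg:
  "ring_of_server (combined_alg alg h r) = (if r = s then None else Some (ring_index r))"
  by (simp add: combined_alg_def)

lemma combined_alg_choices_ring:
  "filter (\<lambda>x. ring_of_server (snd x) = Some i) (zip \<sigma> (choices (combined_alg alg) \<sigma>))
   = map (\<lambda>(r, j). (r, server_of_ring i j)) (zip (filter (in_ring i) \<sigma>) (choices (alg i) (filter (in_ring i) \<sigma>)))"
proof (induction \<sigma> rule: rev_induct)
  case (snoc r \<sigma>)
  show ?case
  proof (cases "in_ring i r")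
    case True
    then have "r \<noteq> s" "ring_index r = i" by (auto simp: in_ring_def)
    then show ?thesis using snoc True by (simp add: choices_snoc ring_of_combined_alg combined_alg_def)
  next
    case False
    then have "ring_of_server (combined_alg alg \<sigma> r) \<noteq> Some i"
      by (auto simp: ring_of_combined_alg in_ring_def)
    then show ?thesis using snoc False by (simp add: choices_snoc)
  qed
qed simp

lemma combined_alg_choices_source:
  "filter (\<lambda>x. ring_of_server (snd x) = None) (zip \<sigma> (choices (combined_alg alg) \<sigma>))
   = map (\<lambda>p. (p, 0)) (filter (\<lambda>r. r = s) \<sigma>)"
proof (induction \<sigma> rule: rev_induct)
  case (snoc r \<sigma>)
  then show ?case by (cases "r = s") (simp_all add: choices_snoc ring_of_combined_alg combined_alg_def)
qed simp

lemma combined_alg_choices_ring_of: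
  "\<forall>x\<in>set (zip \<sigma> (choices (combined_alg alg) \<sigma>)).
     ring_of_server (snd x) = (if fst x = s then None else Some (ring_index (fst x)))"
  by (induction \<sigma> rule: rev_induct) (simp_all add: choices_snoc ring_of_combined_alg)

lemma alg_cost_combined_alg:
  assumes "set \<sigma> \<subseteq> M"
  defines "I \<equiv> ring_index ` {p \<in> set \<sigma>. p \<noteq> s}"
  shows "alg_cost d s (combined_alg alg) \<sigma> = (\<Sum>i\<in>I. alg_cost d s (alg i) (filter (in_ring i) \<sigma>))"
proof -
  define L where "L = zip \<sigma> (choices (combined_alg alg) \<sigma>)"
  let ?cost = "\<lambda>c. serve_cost d (\<lambda>_. s) (filter (\<lambda>x. ring_of_server (snd x) = c) L)"
  have ring_cost: "?cost (Some i) = alg_cost d s (alg i) (filter (in_ring i) \<sigma>)" for i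
    by (simp add: L_def combined_alg_choices_ring serve_cost_rename_servers[OF inj_server_of_ring]
        alg_cost_choices comp_def)
  have "finite I" by (simp add: I_def)
  have "\<forall>x\<in>set L. ring_of_server (snd x) \<in> insert None (Some ` I)"
  proof
    fix x assume "x \<in> set L"
    moreover have "fst x \<in> set \<sigma>" using \<open>x \<in> set L\<close> set_zip_leftD[of "fst x" "snd x"] by (simp add: L_def)
    ultimately show "ring_of_server (snd x) \<in> insert None (Some ` I)"
      using combined_alg_choices_ring_of[of \<sigma> alg] by (auto simp: L_def I_def)
  qed
  then have "alg_cost d s (combined_alg alg) \<sigma> = (\<Sum>c\<in>insert None (Some ` I). ?cost c)"
    unfolding L_def alg_cost_choices by (intro serve_cost_sum_classes) (simp_all add: \<open>finite I\<close>)
  also have "\<dots> = ?cost None + (\<Sum>i\<in>I. ?cost (Some i))"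
    using \<open>finite I\<close> by (simp add: sum.reindex)
  also have "?cost None = path_length d s (filter (\<lambda>r. r = s) \<sigma>)"
    by (simp add: L_def combined_alg_choices_source serve_cost_single_server)
  also have "\<dots> = 0"
    by (rule path_length_stay) (auto simp: zero source_in)
  finally show ?thesis by (simp add: ring_cost)
qed

theorem competitive_if_rings_strictly_competitive:
  assumes "\<And>i. strictly_competitive_alg (ring_space i) (ring_metric i) s \<rho> (alg i)"
  shows "infinite_server_competitive M d s"
proof -
  have "alg_cost d s (combined_alg alg) \<sigma> \<le> (40 * max \<rho> 0) * opt_cost d s \<sigma> + 0"
    if \<sigma>: "set \<sigma> \<subseteq> M" for \<sigma>
  proof -
    let ?I = "ring_index ` {p \<in> set \<sigma>. p \<noteq> s}" and ?\<sigma> = "\<lambda>i. filter (in_ring i) \<sigma>"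
    have ring: "set (?\<sigma> i) \<subseteq> ring_space i" for i using \<sigma> by (auto simp: ring_space_def)
    have "alg_cost d s (alg i) (?\<sigma> i) \<le> 4 * max \<rho> 0 * opt_cost (ring_metric i) s (?\<sigma> i)" for i
    proof -
      have "alg_cost d s (alg i) (?\<sigma> i) \<le> 4 * alg_cost (ring_metric i) s (alg i) (?\<sigma> i)"
        by (rule alg_cost_le_scaled[OF dist_le_ring_metric source_in_ring_space ring])
      also have "alg_cost (ring_metric i) s (alg i) (?\<sigma> i) \<le> \<rho> * opt_cost (ring_metric i) s (?\<sigma> i)"
        using assms[of i] ring[of i] by (simp add: strictly_competitive_alg_def)
      also have "\<dots> \<le> max \<rho> 0 * opt_cost (ring_metric i) s (?\<sigma> i)"
        by (intro mult_right_mono opt_cost_nonneg ring_metric_nonneg) simp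
      finally show ?thesis by simp
    qed
    then have "(\<Sum>i\<in>?I. alg_cost d s (alg i) (?\<sigma> i))
        \<le> (\<Sum>i\<in>?I. 4 * max \<rho> 0 * opt_cost (ring_metric i) s (?\<sigma> i))"
      by (rule sum_mono)
    then have "alg_cost d s (combined_alg alg) \<sigma> \<le> 4 * max \<rho> 0 * (\<Sum>i\<in>?I. opt_cost (ring_metric i) s (?\<sigma> i))"
      by (simp only: alg_cost_combined_alg[OF \<sigma>] sum_distrib_left)
    also have "\<dots> \<le> 4 * max \<rho> 0 * (10 * opt_cost d s \<sigma>)"
      by (intro mult_left_mono sum_ring_opt_cost_le \<sigma>) simp_all
    finally show ?thesis by simp
  qed
  then show ?thesis unfolding infinite_server_competitive_def by blast
qed

end

theorem corollary3:
  fixes M :: "'a set" and d :: "'a \<Rightarrow> 'a \<Rightarrow> real" and s :: 'a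
  assumes "\<exists>\<rho> :: real. \<forall>(M' :: 'a set) d' s'.
             Metric_space M' d' \<and> s' \<in> M' \<and>
             (\<forall>p \<in> M' - {s'}. \<forall>q \<in> M' - {s'}. d' s' p = d' s' q)
             \<longrightarrow> (\<exists>alg. strictly_competitive_alg M' d' s' \<rho> alg)"
    and "Metric_space M d" and "s \<in> M"
  shows "infinite_server_competitive M d s"
proof -
  interpret pointed_metric_space M d s
    by (rule pointed_metric_space.intro[OF assms(2)]) (rule pointed_metric_space_axioms.intro[OF assms(3)])
  obtain \<rho> where \<rho>: "\<forall>(M' :: 'a set) d' s'.
             Metric_space M' d' \<and> s' \<in> M' \<and>
             (\<forall>p \<in> M' - {s'}. \<forall>q \<in> M' - {s'}. d' s' p = d' s' q)
             \<longrightarrow> (\<exists>alg. strictly_competitive_alg M' d' s' \<rho> alg)"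
    using assms(1) by blast
  have "\<exists>alg. strictly_competitive_alg (ring_space i) (ring_metric i) s \<rho> alg" for i
    using \<rho> Metric_space_ring_metric[of i] source_in_ring_space[of i] ring_metric_source_equidistant[of i]
    by blast
  then obtain alg where "\<And>i. strictly_competitive_alg (ring_space i) (ring_metric i) s \<rho> (alg i)"
    by metis
  then show ?thesis by (rule competitive_if_rings_strictly_competitive)
qed

end
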